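(* Assume $V=L$. Every $\eta\in\Xi$ is $\Pi$-isolated, i.e. for every $\xi\in\Xi$ with $\eta\subseteq\xi$ there is a permutation $\pi\in\Pi$ with $\pi(i)=i$ for all $i\in\eta$ and $\xi\cap\{\pi(j):j\in\xi\}=\eta$.
   Context: $T$ is the set of all nonempty finite sequences of countable ordinals, ordered by strict extension $\subset$. $\Xi$ is the set of all at most countable $\xi\subseteq T$ closed downward under $\subset$. Every ordinal $\alpha$ is uniquely $\lambda+m$ with $\lambda$ a limit ordinal or $0$ and $m<\omega$; $\alpha$ is even/odd according to $m$. For $i,j\in T$, $i\equiv j$ means $i,j$ have the same length and $i(k),j(k)$ have the same parity for every $k$. $\Pi$ is the group of all bijections $\pi:T\to T$ such that $i\subset j\iff\pi(i)\subset\pi(j)$ for all $i,j\in T$, and $\pi(i)\equiv i$ for all $i\in T$. *)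

theory Defs
  imports Main "HOL-Library.Sublist" "HOL-Library.Countable_Set"
begin

text \<open>Countable ordinals are modelled by an arbitrary wellorder type 'o whose
  initial segments are countable but which is itself uncountable, i.e. a type of
  order type omega_1.\<close>

definition omega1_type :: "'o::wellorder itself \<Rightarrow> bool" where
  "omega1_type _ \<longleftrightarrow> (\<forall>a::'o. countable {b. b < a}) \<and> \<not> countable (UNIV :: 'o set)"

definition is_succ :: "'o::wellorder \<Rightarrow> 'o \<Rightarrow> bool" where
  "is_succ a b \<longleftrightarrow> a < b \<and> \<not> (\<exists>z. a < z \<and> z < b)"

definition limit_or_zero :: "'o::wellorder \<Rightarrow> bool" where
  "limit_or_zero l \<longleftrightarrow> \<not> (\<exists>a. is_succ a l)"

text \<open>plus_fin l a m  means  a = l + m.\<close>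
inductive plus_fin :: "'o::wellorder \<Rightarrow> 'o \<Rightarrow> nat \<Rightarrow> bool" where
  base: "limit_or_zero l \<Longrightarrow> plus_fin l l 0"
| step: "plus_fin l a m \<Longrightarrow> is_succ a b \<Longrightarrow> plus_fin l b (Suc m)"

definition ord_even :: "'o::wellorder \<Rightarrow> bool" where
  "ord_even a \<longleftrightarrow> (\<exists>l m. limit_or_zero l \<and> plus_fin l a m \<and> even m)"

definition TT :: "'o list set" where
  "TT = {s. s \<noteq> []}"

definition Xi :: "'o list set set" where
  "Xi = {xi. xi \<subseteq> TT \<and> countable xi \<and>
              (\<forall>j\<in>xi. \<forall>i\<in>TT. strict_prefix i j \<longrightarrow> i \<in> xi)}"

definition par_equiv :: "'o::wellorder list \<Rightarrow> 'o list \<Rightarrow> bool" where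
  "par_equiv i j \<longleftrightarrow> length i = length j \<and>
     (\<forall>k < length i. ord_even (i ! k) \<longleftrightarrow> ord_even (j ! k))"

definition PiG :: "('o::wellorder list \<Rightarrow> 'o list) set" where
  "PiG = {p. bij_betw p TT TT \<and>
             (\<forall>i\<in>TT. \<forall>j\<in>TT. strict_prefix i j \<longleftrightarrow> strict_prefix (p i) (p j)) \<and>
             (\<forall>i\<in>TT. par_equiv (p i) i)}"

definition Pi_isolated :: "'o::wellorder list set \<Rightarrow> bool" where
  "Pi_isolated eta \<longleftrightarrow> (\<forall>xi\<in>Xi. eta \<subseteq> xi \<longrightarrow>
     (\<exists>p\<in>PiG. (\<forall>i\<in>eta. p i = i) \<and> xi \<inter> p ` xi = eta))"

end

theory Submission
  imports Defs
begin

text \<open>At every node s choose a parity-preserving permutation \<sigma>(s) of the countable ordinals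
  that fixes the children of s lying in \<eta> and sends the remaining children of s in \<xi> outside
  the countable set of all children of s in \<xi>. This is possible because each parity class is
  uncountable, so the countably many ordinals to be moved can be swapped with fresh ordinals of
  the same parity. Applying \<sigma>(i|k) to the k-th entry of every sequence i yields a
  member of \<Pi> fixing \<eta>; since \<xi> is closed under initial segments, induction along a branch
  shows that it sends every node of \<xi> - \<eta> out of \<xi>.\<close>

section \<open>Parity of countable ordinals\<close>

lemma is_succ_unique_pred: "is_succ a b \<Longrightarrow> is_succ a' b \<Longrightarrow> a = a'"
  unfolding is_succ_def by (metis linorder_neqE)

lemma plus_fin_0D: "plus_fin l a 0 \<Longrightarrow> a = l \<and> limit_or_zero l"
  by (cases rule: plus_fin.cases) auto

lemma plus_fin_SucD: "plus_fin l b (Suc k) \<Longrightarrow> \<exists>a. plus_fin l a k \<and> is_succ a b"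
  by (cases rule: plus_fin.cases) auto

lemma plus_fin_limit_or_zero: "plus_fin l a m \<Longrightarrow> limit_or_zero l"
  by (induction rule: plus_fin.induct) auto

lemma plus_fin_unique_nat: "plus_fin l a m \<Longrightarrow> plus_fin l' a m' \<Longrightarrow> m = m'"
proof (induction m arbitrary: a m')
  case 0
  then have "limit_or_zero a" using plus_fin_0D by blast
  then show ?case using 0 by (cases m') (auto dest!: plus_fin_SucD simp: limit_or_zero_def)
next
  case (Suc k)
  then obtain a0 where a0: "plus_fin l a0 k" "is_succ a0 a" using plus_fin_SucD by blast
  show ?case
  proof (cases m')
    case 0
    then show ?thesis using Suc.prems a0 by (auto dest!: plus_fin_0D simp: limit_or_zero_def)
  next
    case (Suc k')
    then obtain a1 where "plus_fin l' a1 k'" "is_succ a1 a" using Suc.prems plus_fin_SucD by blast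
    then show ?thesis using a0 Suc.IH Suc is_succ_unique_pred by metis
  qed
qed

lemma plus_fin_exists: "\<exists>l m. plus_fin l (a::'o::wellorder) m"
proof (induction a rule: less_induct)
  case (less a)
  show ?case
  proof (cases "limit_or_zero a")
    case True
    then show ?thesis using plus_fin.base by blast
  next
    case False
    then obtain a0 where "is_succ a0 a" unfolding limit_or_zero_def by blast
    moreover from this have "a0 < a" unfolding is_succ_def by blast
    ultimately show ?thesis using less plus_fin.step by blast
  qed
qed

lemma ord_even_succ_iff: "is_succ a b \<Longrightarrow> ord_even b \<longleftrightarrow> \<not> ord_even a"
proof -
  assume succ: "is_succ a b"
  obtain l m where a: "plus_fin l a m" using plus_fin_exists by blast
  then have b: "plus_fin l b (Suc m)" using succ plus_fin.step by blast
  have "ord_even c \<longleftrightarrow> even n" if "plus_fin l c n" for c n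
    using that by (auto simp: ord_even_def dest: plus_fin_unique_nat intro: plus_fin_limit_or_zero)
  then show ?thesis using a b by simp
qed

lemma involution_extending_inj:
  assumes inj: "inj_on f A" and disj: "A \<inter> f ` A = {}"
  obtains s where "bij s" "\<forall>x\<in>A. s x = f x \<and> s (f x) = x" "\<forall>x. x \<notin> A \<union> f ` A \<longrightarrow> s x = x"
proof
  define s where "s x = (if x \<in> A then f x else if x \<in> f ` A then inv_into A f x else x)" for x
  show fA: "\<forall>x\<in>A. s x = f x \<and> s (f x) = x" using inj disj unfolding s_def by auto
  show rest: "\<forall>x. x \<notin> A \<union> f ` A \<longrightarrow> s x = x" unfolding s_def by simp
  have "s (s x) = x" for x
    using fA rest by (cases "x \<in> A \<union> f ` A") auto
  then show "bij s" by (rule involuntory_imp_bij)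
qed

section \<open>Ordinals below omega_1\<close>

context
  assumes omega1: "omega1_type TYPE('o::wellorder)"
begin

lemma omega1_countable_bounded:
  assumes "countable (D::'o set)"
  shows "\<exists>c. \<forall>d\<in>D. d < c"
proof (rule ccontr)
  assume "\<not> ?thesis"
  then have "UNIV \<subseteq> (\<Union>d\<in>D. insert d {b. b < d})" by (auto simp: not_less) (metis antisym_conv1)
  moreover have "countable (\<Union>d\<in>D. insert d {b. b < d})"
    using assms omega1 unfolding omega1_type_def by auto
  ultimately show False using omega1 countable_subset unfolding omega1_type_def by blast
qed

lemma omega1_ex_succ: "\<exists>b. is_succ (c::'o) b"
proof -
  obtain x where "c < x" using omega1_countable_bounded[of "{c}"] by auto
  then have "c < (LEAST x. c < x)" by (rule LeastI)
  then show ?thesis unfolding is_succ_def using not_less_Least by blast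
qed

lemma omega1_parity_class_uncountable: "uncountable {x::'o. ord_even x = P}"
proof
  assume "countable {x::'o. ord_even x = P}"
  then obtain c where "\<forall>x\<in>{x::'o. ord_even x = P}. x < c"
    using omega1_countable_bounded by blast
  then have c: "x < c" if "ord_even x = P" for x using that by simp
  obtain b where b: "is_succ c b" using omega1_ex_succ by blast
  then have "c < b" unfolding is_succ_def by blast
  have "ord_even c = P \<or> ord_even b = P" using ord_even_succ_iff[OF b] by blast
  then have "c < c \<or> b < c" using c by blast
  with \<open>c < b\<close> show False by auto
qed

lemma omega1_parity_preserving_inj_avoiding:
  assumes "countable (A::'o set)" and "countable (B::'o set)"
  shows "\<exists>f. inj_on f A \<and> f ` A \<inter> B = {} \<and> (\<forall>x. ord_even (f x) = ord_even x)"
proof -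
  have "\<forall>P. \<exists>g::nat \<Rightarrow> 'o. inj g \<and> range g \<subseteq> {x. ord_even x = P} - B"
  proof
    fix P
    have "uncountable ({x. ord_even x = P} - B)"
      using uncountable_minus_countable[OF omega1_parity_class_uncountable assms(2)] .
    then have "infinite ({x. ord_even x = P} - B)" using countable_finite by blast
    then show "\<exists>g::nat \<Rightarrow> 'o. inj g \<and> range g \<subseteq> {x. ord_even x = P} - B"
      by (rule infinite_countable_subset)
  qed
  from choice[OF this] obtain g :: "bool \<Rightarrow> nat \<Rightarrow> 'o"
    where "\<forall>P. inj (g P) \<and> range (g P) \<subseteq> {x. ord_even x = P} - B" ..
  then have g: "\<And>P. inj (g P)" "\<And>P. range (g P) \<subseteq> {x. ord_even x = P} - B"
    by blast+
  define f where "f x = g (ord_even x) (to_nat_on A x)" for x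
  have parity: "ord_even (f x) = ord_even x" for x
    using g(2) unfolding f_def by blast
  have "inj_on f A"
  proof
    fix x y assume "x \<in> A" "y \<in> A" "f x = f y"
    moreover from \<open>f x = f y\<close> have "ord_even x = ord_even y"
      using parity[of x] parity[of y] by simp
    ultimately have "to_nat_on A x = to_nat_on A y"
      using injD[OF g(1)] unfolding f_def by simp
    then show "x = y"
      using to_nat_on_inj[OF assms(1)] \<open>x \<in> A\<close> \<open>y \<in> A\<close> by blast
  qed
  moreover have "f ` A \<inter> B = {}"
    using g(2) unfolding f_def by blast
  ultimately show ?thesis using parity by blast
qed

lemma omega1_parity_perm_moving_off:
  assumes "countable (B::'o set)" and "C \<subseteq> B"
  shows "\<exists>\<sigma>. bij \<sigma> \<and> (\<forall>x. ord_even (\<sigma> x) = ord_even x) \<and> (\<forall>x\<in>C. \<sigma> x = x) \<and> (\<forall>x\<in>B - C. \<sigma> x \<notin> B)"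
proof -
  obtain f where f: "inj_on f (B - C)" "f ` (B - C) \<inter> B = {}" "\<forall>x. ord_even (f x) = ord_even x"
    using omega1_parity_preserving_inj_avoiding[of "B - C" B] assms(1) by auto
  have disj: "(B - C) \<inter> f ` (B - C) = {}" using f(2) by blast
  obtain \<sigma> where \<sigma>: "bij \<sigma>" "\<forall>x\<in>B - C. \<sigma> x = f x \<and> \<sigma> (f x) = x"
      "\<forall>x. x \<notin> (B - C) \<union> f ` (B - C) \<longrightarrow> \<sigma> x = x"
    by (rule involution_extending_inj[OF f(1) disj])
  have "ord_even (\<sigma> x) = ord_even x" for x
  proof (cases "x \<in> f ` (B - C)")
    case True
    then obtain a where "a \<in> B - C" "x = f a" by blast
    then show ?thesis using \<sigma>(2) f(3) by simp
  next
    case False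
    then show ?thesis using \<sigma>(2,3) f(3) by (cases "x \<in> B - C") auto
  qed
  moreover have "\<forall>x\<in>C. \<sigma> x = x" using \<sigma>(3) f(2) assms(2) by blast
  moreover have "\<forall>x\<in>B - C. \<sigma> x \<notin> B" using \<sigma>(2) f(2) by blast
  ultimately show ?thesis using \<sigma>(1) by blast
qed

end

section \<open>Tree automorphisms induced by node permutations\<close>

lemma prefix_iff_take: "prefix xs ys \<longleftrightarrow> take (length xs) ys = xs"
  unfolding prefix_def by (metis append_eq_conv_conj)

lemma strict_prefix_snoc [simp]: "strict_prefix xs (xs @ [x])"
  by (rule strict_prefixI') simp

definition tree_perm :: "('a list \<Rightarrow> 'a \<Rightarrow> 'a) \<Rightarrow> 'a list \<Rightarrow> 'a list" where
  "tree_perm \<sigma> i = map (\<lambda>k. \<sigma> (take k i) (i ! k)) [0..<length i]"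

lemma tree_perm_Nil [simp]: "tree_perm \<sigma> [] = []"
  by (simp add: tree_perm_def)

lemma tree_perm_snoc [simp]: "tree_perm \<sigma> (xs @ [x]) = tree_perm \<sigma> xs @ [\<sigma> xs x]"
  by (auto simp: tree_perm_def nth_append)

lemma length_tree_perm [simp]: "length (tree_perm \<sigma> xs) = length xs"
  by (simp add: tree_perm_def)

lemma tree_perm_eq_Nil_iff [simp]: "tree_perm \<sigma> xs = [] \<longleftrightarrow> xs = []"
  by (metis length_0_conv length_tree_perm)

lemma nth_tree_perm: "k < length i \<Longrightarrow> tree_perm \<sigma> i ! k = \<sigma> (take k i) (i ! k)"
  by (simp add: tree_perm_def)

lemma take_tree_perm: "take n (tree_perm \<sigma> i) = tree_perm \<sigma> (take n i)"
  by (simp add: tree_perm_def take_map min_def)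

lemma inj_tree_perm:
  assumes "\<And>s. inj (\<sigma> s)"
  shows "inj (tree_perm \<sigma>)"
proof
  show "i = j" if "tree_perm \<sigma> i = tree_perm \<sigma> j" for i j
    using that
  proof (induction i arbitrary: j rule: rev_induct)
    case Nil
    then show ?case by (metis tree_perm_eq_Nil_iff)
  next
    case (snoc x xs)
    then obtain ys y where j: "j = ys @ [y]"
      by (metis length_tree_perm length_0_conv rev_exhaust snoc_eq_iff_butlast)
    then have "tree_perm \<sigma> xs = tree_perm \<sigma> ys" "\<sigma> xs x = \<sigma> ys y" using snoc.prems by auto
    then show ?case using snoc.IH j assms by (metis injD)
  qed
qed

lemma surj_tree_perm:
  assumes "\<And>s. surj (\<sigma> s)"
  shows "surj (tree_perm \<sigma>)"
proof -
  have "y \<in> range (tree_perm \<sigma>)" for y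
  proof (induction y rule: rev_induct)
    case Nil
    show ?case by (metis rangeI tree_perm_Nil)
  next
    case (snoc b ys)
    then obtain xs where "tree_perm \<sigma> xs = ys" by blast
    moreover obtain a where "\<sigma> xs a = b" using assms by (metis surjD)
    ultimately show ?case by (metis rangeI tree_perm_snoc)
  qed
  then show ?thesis by blast
qed

lemma prefix_tree_perm_iff:
  assumes "inj (tree_perm \<sigma>)"
  shows "prefix (tree_perm \<sigma> i) (tree_perm \<sigma> j) \<longleftrightarrow> prefix i j"
  by (auto simp: prefix_iff_take take_tree_perm inj_eq[OF assms])

lemma strict_prefix_tree_perm_iff:
  assumes "inj (tree_perm \<sigma>)"
  shows "strict_prefix (tree_perm \<sigma> i) (tree_perm \<sigma> j) \<longleftrightarrow> strict_prefix i j"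
  by (simp add: strict_prefix_def prefix_tree_perm_iff[OF assms] inj_eq[OF assms])

lemma tree_perm_in_PiG:
  assumes "\<And>s. bij (\<sigma> s)" and "\<And>s x. ord_even (\<sigma> s x) = ord_even x"
  shows "tree_perm \<sigma> \<in> PiG"
proof -
  have inj: "inj (tree_perm \<sigma>)" by (rule inj_tree_perm, rule bij_is_inj, fact)
  have surj: "surj (tree_perm \<sigma>)" by (rule surj_tree_perm, rule bij_is_surj, fact)
  have "tree_perm \<sigma> ` TT = TT"
  proof
    show "tree_perm \<sigma> ` TT \<subseteq> TT" unfolding TT_def by auto
    show "TT \<subseteq> tree_perm \<sigma> ` TT"
    proof
      fix y :: "'a list" assume "y \<in> TT"
      moreover obtain x where "y = tree_perm \<sigma> x" using surj by (rule surjE)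
      ultimately show "y \<in> tree_perm \<sigma> ` TT" unfolding TT_def by auto
    qed
  qed
  then have "bij_betw (tree_perm \<sigma>) TT TT"
    using inj_on_subset[OF inj subset_UNIV] by (simp add: bij_betw_def)
  moreover have "par_equiv (tree_perm \<sigma> i) i" for i
    by (simp add: par_equiv_def nth_tree_perm assms(2))
  ultimately show ?thesis
    by (simp add: PiG_def strict_prefix_tree_perm_iff[OF inj])
qed

section \<open>Isolating a subtree\<close>

lemma Xi_strict_prefix_closed: "xi \<in> Xi \<Longrightarrow> j \<in> xi \<Longrightarrow> strict_prefix i j \<Longrightarrow> i \<noteq> [] \<Longrightarrow> i \<in> xi"
  unfolding Xi_def TT_def by auto

lemma Nil_notin_Xi: "xi \<in> Xi \<Longrightarrow> [] \<notin> xi"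
  unfolding Xi_def TT_def by auto

lemma tree_perm_fixes_Xi:
  assumes eta: "eta \<in> Xi" and stay: "\<And>s x. s @ [x] \<in> eta \<Longrightarrow> \<sigma> s x = x" and "i \<in> eta"
  shows "tree_perm \<sigma> i = i"
proof -
  have "i \<in> eta \<or> i = [] \<Longrightarrow> tree_perm \<sigma> i = i"
  proof (induction i rule: rev_induct)
    case (snoc x xs)
    then have "xs \<in> eta \<or> xs = []"
      using Xi_strict_prefix_closed[OF eta, of "xs @ [x]" xs] by auto
    then show ?case using snoc stay by simp
  qed simp
  then show ?thesis using \<open>i \<in> eta\<close> by blast
qed

lemma tree_perm_moves_off_Xi:
  assumes xi: "xi \<in> Xi" and eta: "eta \<in> Xi"
    and stay: "\<And>s x. s @ [x] \<in> eta \<Longrightarrow> \<sigma> s x = x"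
    and move: "\<And>s x. s @ [x] \<in> xi \<Longrightarrow> s @ [x] \<notin> eta \<Longrightarrow> s @ [\<sigma> s x] \<notin> xi"
    and "j \<in> xi" and "j \<notin> eta"
  shows "tree_perm \<sigma> j \<notin> xi"
  using \<open>j \<in> xi\<close> \<open>j \<notin> eta\<close>
proof (induction j rule: rev_induct)
  case Nil
  then show ?case using Nil_notin_Xi[OF xi] by simp
next
  case (snoc x xs)
  show ?case
  proof (cases "xs \<in> eta \<or> xs = []")
    case True
    then have "tree_perm \<sigma> xs = xs" using tree_perm_fixes_Xi[OF eta stay] by auto
    then show ?thesis using snoc.prems move by simp
  next
    case False
    then have "tree_perm \<sigma> xs \<notin> xi"
      using snoc Xi_strict_prefix_closed[OF xi, of "xs @ [x]" xs] by auto
    then show ?thesis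
      using Xi_strict_prefix_closed[OF xi, of "tree_perm \<sigma> (xs @ [x])" "tree_perm \<sigma> xs"] False
      by auto
  qed
qed

lemma tree_perm_isolates_Xi:
  assumes xi: "xi \<in> Xi" and eta: "eta \<in> Xi" and "eta \<subseteq> xi"
    and stay: "\<And>s x. s @ [x] \<in> eta \<Longrightarrow> \<sigma> s x = x"
    and move: "\<And>s x. s @ [x] \<in> xi \<Longrightarrow> s @ [x] \<notin> eta \<Longrightarrow> s @ [\<sigma> s x] \<notin> xi"
  shows "xi \<inter> tree_perm \<sigma> ` xi = eta"
proof
  show "xi \<inter> tree_perm \<sigma> ` xi \<subseteq> eta"
    using tree_perm_moves_off_Xi[OF xi eta stay move] tree_perm_fixes_Xi[OF eta stay] by force
  show "eta \<subseteq> xi \<inter> tree_perm \<sigma> ` xi"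
    using tree_perm_fixes_Xi[OF eta stay] \<open>eta \<subseteq> xi\<close> by force
qed

definition children :: "'a list set \<Rightarrow> 'a list \<Rightarrow> 'a set" where
  "children t s = {x. s @ [x] \<in> t}"

lemma countable_children:
  assumes "countable t"
  shows "countable (children t s)"
proof (rule countable_subset)
  show "children t s \<subseteq> last ` t" unfolding children_def by force
qed (use assms in simp)

theorem lemma4p17:
  fixes eta :: "'o::wellorder list set"
  assumes "omega1_type TYPE('o)"
    and "eta \<in> Xi"
  shows "Pi_isolated eta"
  unfolding Pi_isolated_def
proof (intro ballI impI)
  fix xi :: "'o list set" assume xi: "xi \<in> Xi" and "eta \<subseteq> xi"
  have "\<forall>s. \<exists>\<sigma>. bij \<sigma> \<and> (\<forall>x. ord_even (\<sigma> x) = ord_even x) \<and> (\<forall>x\<in>children eta s. \<sigma> x = x)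
      \<and> (\<forall>x\<in>children xi s - children eta s. \<sigma> x \<notin> children xi s)"
    (is "\<forall>s. \<exists>\<sigma>. ?good s \<sigma>")
  proof
    fix s
    have "countable xi" using xi unfolding Xi_def by blast
    then have "countable (children xi s)" by (rule countable_children)
    moreover have "children eta s \<subseteq> children xi s" using \<open>eta \<subseteq> xi\<close> unfolding children_def by blast
    ultimately show "\<exists>\<sigma>. ?good s \<sigma>" by (rule omega1_parity_perm_moving_off[OF assms(1)])
  qed
  from choice[OF this] obtain \<sigma> where \<sigma>: "\<forall>s. ?good s (\<sigma> s)" ..
  then have "tree_perm \<sigma> \<in> PiG" by (intro tree_perm_in_PiG) auto
  have stay: "\<sigma> s x = x" if "s @ [x] \<in> eta" for s x
    using \<sigma> that unfolding children_def by blast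
  have move: "s @ [\<sigma> s x] \<notin> xi" if "s @ [x] \<in> xi" "s @ [x] \<notin> eta" for s x
    using \<sigma> that unfolding children_def by blast
  show "\<exists>p\<in>PiG. (\<forall>i\<in>eta. p i = i) \<and> xi \<inter> p ` xi = eta"
  proof (intro bexI conjI ballI)
    show "tree_perm \<sigma> i = i" if "i \<in> eta" for i
      using tree_perm_fixes_Xi[OF assms(2) stay that] .
    show "xi \<inter> tree_perm \<sigma> ` xi = eta"
      using tree_perm_isolates_Xi[OF xi assms(2) \<open>eta \<subseteq> xi\<close> stay move] .
  qed fact
qed

end
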